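(* Let $p:\mathcal P\to[1,\infty]$ be measurable, let $E\subset\mathcal P$ be measurable with $\mu(E)<\infty$, and let $E_n=\{x\in E:p(x)>n\}$, $n=1,2,\dots$. Then $$e^{p(\cdot)}\in\bigcap_{q\in[1,\infty)}L^q(E)\quad\iff\quad\|\chi_{E_n}\|_{L^{p(\cdot)}(E)}\to0\ \text{ as } n\to\infty.$$ Moreover, if $\|e^{p(\cdot)}\|_{L^{q_0}(E)}=\infty$ for some $q_0\in[1,\infty)$, then $\|\chi_{E_n}\|_{L^{p(\cdot)}(E)}\ge e^{-q_0}$ for every $n=1,2,\dots$.
   Context: $(\mathcal P,\mu)$ is a measure space (in the paper, a metric space with a positive complete Borel measure). For measurable $E$ and $p:E\to[1,\infty]$, the Luxemburg norm is $\|f\|_{L^{p(\cdot)}(E)}=\inf\{\lambda>0:\int_E(|f(x)|/\lambda)^{p(x)}\,d\mu(x)\le1\}$, with the convention $a^\infty=0$ for $0\le a<1$, $1^\infty=1$, and $a^\infty=\infty$ for $a>1$. *)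

theory Defs
  imports "HOL-Analysis.Analysis"
begin

definition varpow :: "real \<Rightarrow> ereal \<Rightarrow> ennreal" where
  "varpow a q = (if q = \<infinity> then (if a < 1 then 0 else if a = 1 then 1 else \<infinity>)
                 else ennreal (a powr (real_of_ereal q)))"

definition modular :: "'a measure \<Rightarrow> ('a \<Rightarrow> ereal) \<Rightarrow> 'a set \<Rightarrow> ('a \<Rightarrow> real) \<Rightarrow> ennreal" where
  "modular M p E f = (\<integral>\<^sup>+ x\<in>E. varpow \<bar>f x\<bar> (p x) \<partial>M)"

text \<open>Luxemburg norm (value \<infinity> if no admissible \<lambda> exists).\<close>
definition lux_norm :: "'a measure \<Rightarrow> ('a \<Rightarrow> ereal) \<Rightarrow> 'a set \<Rightarrow> ('a \<Rightarrow> real) \<Rightarrow> ereal" where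
  "lux_norm M p E f =
     Inf {ereal l | l. l > 0 \<and> modular M p E (\<lambda>x. f x / l) \<le> 1}"

definition exp_p_pow :: "real \<Rightarrow> ereal \<Rightarrow> ennreal" where
  "exp_p_pow q t = (if t = \<infinity> then \<infinity> else ennreal (exp (q * real_of_ereal t)))"

end

theory Submission
  imports Defs
begin

text \<open>For \<open>\<lambda> > 0\<close> the modular of \<open>\<chi>(E\<^sub>n) / \<lambda>\<close> is
  \<open>\<integral>\<^bsub>E\<^sub>n\<^esub> (1/\<lambda>)^p\<close>. Since \<open>(1/\<epsilon>)^t \<le> e^(-n) e^(q t)\<close> for \<open>t \<ge> n\<close> and \<open>q = ln(1/\<epsilon>) + 1\<close>,
  integrability of \<open>e^(q p)\<close> makes the modular of \<open>\<chi>(E\<^sub>n) / \<epsilon>\<close> at most 1 as soon as \<open>e^n\<close>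
  exceeds \<open>\<integral>\<^bsub>E\<^esub> e^(q p)\<close>, so \<open>\<parallel>\<chi>(E\<^sub>n)\<parallel> \<le> \<epsilon>\<close> eventually. Conversely, if
  \<open>\<integral>\<^bsub>E\<^esub> e^(q p) = \<infinity>\<close>, then, as \<open>e^(q p) \<le> e^(q n)\<close> on \<open>E - E\<^sub>n\<close> and \<open>\<mu>(E) < \<infinity>\<close>, already
  \<open>\<integral>\<^bsub>E\<^sub>n\<^esub> e^(q p) = \<infinity>\<close>; for \<open>\<lambda> < e^(-q)\<close> we have \<open>(1/\<lambda>)^p \<ge> e^(q p)\<close>, so the modular of
  \<open>\<chi>(E\<^sub>n) / \<lambda>\<close> is infinite and \<open>\<parallel>\<chi>(E\<^sub>n)\<parallel> \<ge> e^(-q)\<close> for every \<open>n\<close>.\<close>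

lemma borel_measurable_exp_p_pow:
  assumes "p \<in> borel_measurable M"
  shows "(\<lambda>x. exp_p_pow q (p x)) \<in> borel_measurable M"
proof -
  have "{x \<in> space M. p x = \<infinity>} = p -` {\<infinity>} \<inter> space M" by auto
  also have "\<dots> \<in> sets M" using assms by (rule measurable_sets) auto
  finally have [measurable]: "{x \<in> space M. p x = \<infinity>} \<in> sets M" .
  show ?thesis using assms unfolding exp_p_pow_def by measurable
qed

lemma lux_norm_nonneg: "0 \<le> lux_norm M p E f"
  unfolding lux_norm_def by (rule Inf_greatest) auto

lemma lux_norm_le:
  assumes "0 < l" "modular M p E (\<lambda>x. f x / l) \<le> 1"
  shows "lux_norm M p E f \<le> ereal l"
  unfolding lux_norm_def by (rule Inf_lower) (use assms in auto)

lemma lux_norm_ge: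
  assumes "\<And>l. 0 < l \<Longrightarrow> l < c \<Longrightarrow> 1 < modular M p E (\<lambda>x. f x / l)"
  shows "ereal c \<le> lux_norm M p E f"
  unfolding lux_norm_def
proof (rule Inf_greatest)
  fix y assume "y \<in> {ereal l | l. 0 < l \<and> modular M p E (\<lambda>x. f x / l) \<le> 1}"
  then obtain l where "y = ereal l" "0 < l" "modular M p E (\<lambda>x. f x / l) \<le> 1" by auto
  with assms[of l] show "ereal c \<le> y" by force
qed

lemma modular_indicator_div:
  assumes "F \<subseteq> E" "0 < l"
  shows "modular M p E (\<lambda>x. indicator F x / l) = (\<integral>\<^sup>+ x\<in>F. varpow (1 / l) (p x) \<partial>M)"
  unfolding modular_def using assms
  by (intro nn_integral_cong) (auto split: split_indicator simp: varpow_def)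

lemma exp_p_pow_le_varpow:
  assumes "0 \<le> t" "1 < a" "exp q \<le> a"
  shows "exp_p_pow q t \<le> varpow a t"
proof (cases t)
  case (real r)
  have "exp (q * r) = exp q powr r" by (simp add: powr_def)
  also have "\<dots> \<le> a powr r" using assms real by (intro powr_mono2) auto
  finally show ?thesis using real by (simp add: exp_p_pow_def varpow_def)
qed (use assms in \<open>auto simp: exp_p_pow_def varpow_def\<close>)

lemma varpow_le_exp_p_pow:
  assumes "0 < a" "ereal s \<le> t"
  shows "varpow a t \<le> ennreal (exp (- s)) * exp_p_pow (ln a + 1) t"
proof (cases t)
  case (real r)
  have "a powr r = exp (r * ln a)" using assms by (simp add: powr_def)
  also have "\<dots> \<le> exp (- s + (ln a + 1) * r)" using assms real by (simp add: algebra_simps)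
  also have "\<dots> = exp (- s) * exp ((ln a + 1) * r)" by (rule exp_add)
  finally show ?thesis using real by (simp add: varpow_def exp_p_pow_def ennreal_mult[symmetric])
qed (use assms in \<open>auto simp: exp_p_pow_def varpow_def ennreal_mult_top\<close>)

lemma set_nn_integral_eq_top_tail:
  assumes [measurable]: "f \<in> borel_measurable M" "E \<in> sets M" "F \<in> sets M"
    and "F \<subseteq> E" "emeasure M E < \<infinity>"
    and bounded: "\<And>x. x \<in> E - F \<Longrightarrow> f x \<le> ennreal C"
    and infinite: "(\<integral>\<^sup>+ x\<in>E. f x \<partial>M) = \<infinity>"
  shows "(\<integral>\<^sup>+ x\<in>F. f x \<partial>M) = \<infinity>"
proof -
  have "(\<integral>\<^sup>+ x\<in>E - F. f x \<partial>M) \<le> (\<integral>\<^sup>+ x\<in>E. ennreal C \<partial>M)"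
    using bounded by (intro nn_integral_mono) (auto split: split_indicator)
  also have "\<dots> < \<infinity>"
    using assms by (simp add: nn_integral_cmult_indicator ennreal_mult_less_top)
  finally have "(\<integral>\<^sup>+ x\<in>E - F. f x \<partial>M) < \<infinity>" .
  moreover have "(\<integral>\<^sup>+ x\<in>E. f x \<partial>M) = (\<integral>\<^sup>+ x\<in>F. f x \<partial>M) + (\<integral>\<^sup>+ x\<in>E - F. f x \<partial>M)"
    using nn_integral_disjoint_pair[of f M F "E - F"] \<open>F \<subseteq> E\<close> by (simp add: Un_absorb1)
  ultimately show ?thesis using infinite by (metis ennreal_add_eq_top infinity_ennreal_def less_top)
qed

lemma lux_norm_indicator_ge_exp:
  assumes "0 \<le> q" "F \<subseteq> E" "\<And>x. x \<in> F \<Longrightarrow> 0 \<le> p x"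
    and infinite: "(\<integral>\<^sup>+ x\<in>F. exp_p_pow q (p x) \<partial>M) = \<infinity>"
  shows "ereal (exp (- q)) \<le> lux_norm M p E (indicator F)"
proof (rule lux_norm_ge)
  fix l :: real assume "0 < l" "l < exp (- q)"
  then have "exp q < 1 / l" by (simp add: exp_minus field_simps)
  moreover have "1 < 1 / l" using \<open>exp q < 1 / l\<close> \<open>0 \<le> q\<close> by (smt (verit) one_le_exp_iff)
  ultimately have "(\<integral>\<^sup>+ x\<in>F. exp_p_pow q (p x) \<partial>M) \<le> (\<integral>\<^sup>+ x\<in>F. varpow (1 / l) (p x) \<partial>M)"
    using assms(3) by (intro nn_integral_mono) (auto intro!: exp_p_pow_le_varpow split: split_indicator)
  then show "1 < modular M p E (\<lambda>x. indicator F x / l)"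
    using infinite modular_indicator_div[OF \<open>F \<subseteq> E\<close> \<open>0 < l\<close>] by (simp add: top_unique)
qed

lemma lux_norm_tail_ge_exp:
  assumes [measurable]: "p \<in> borel_measurable M" "E \<in> sets M"
    and p_nonneg: "\<forall>x\<in>space M. 0 \<le> p x"
    and "emeasure M E < \<infinity>" "0 \<le> q"
    and infinite: "(\<integral>\<^sup>+ x\<in>E. exp_p_pow q (p x) \<partial>M) = \<infinity>"
  shows "ereal (exp (- q)) \<le> lux_norm M p E (indicator {x\<in>E. ereal s < p x})"
proof -
  have E_space: "E \<subseteq> space M" using assms(2) sets.sets_into_space by blast
  then have "{x\<in>E. ereal s < p x} = E \<inter> {x\<in>space M. ereal s < p x}" by auto
  also have "\<dots> \<in> sets M" by measurable
  finally have tail_sets: "{x\<in>E. ereal s < p x} \<in> sets M" .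
  have bounded: "exp_p_pow q (p x) \<le> ennreal (exp (q * s))" if "x \<in> E - {x\<in>E. ereal s < p x}" for x
  proof -
    from that E_space p_nonneg have "0 \<le> p x" "p x \<le> ereal s" by auto
    then obtain r where "p x = ereal r" "r \<le> s" by (cases "p x") auto
    then show ?thesis using \<open>0 \<le> q\<close> by (simp add: exp_p_pow_def mult_left_mono)
  qed
  have "(\<integral>\<^sup>+ x\<in>{x\<in>E. ereal s < p x}. exp_p_pow q (p x) \<partial>M) = \<infinity>"
    by (rule set_nn_integral_eq_top_tail[OF borel_measurable_exp_p_pow _ tail_sets _ _ bounded infinite])
      (use assms in auto)
  then show ?thesis
    using E_space p_nonneg \<open>0 \<le> q\<close> by (intro lux_norm_indicator_ge_exp) auto
qed

lemma lux_norm_tail_le: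
  assumes [measurable]: "p \<in> borel_measurable M" "E \<in> sets M"
    and "0 < \<epsilon>"
    and integral_bound: "(\<integral>\<^sup>+ x\<in>E. exp_p_pow (ln (1 / \<epsilon>) + 1) (p x) \<partial>M) \<le> ennreal (exp s)"
  shows "lux_norm M p E (indicator {x\<in>E. ereal s < p x}) \<le> ereal \<epsilon>"
proof (rule lux_norm_le)
  define q where "q = ln (1 / \<epsilon>) + 1"
  note [measurable] = borel_measurable_exp_p_pow[OF assms(1), of q]
  have "modular M p E (\<lambda>x. indicator {x\<in>E. ereal s < p x} x / \<epsilon>)
      = (\<integral>\<^sup>+ x\<in>{x\<in>E. ereal s < p x}. varpow (1 / \<epsilon>) (p x) \<partial>M)"
    using \<open>0 < \<epsilon>\<close> by (intro modular_indicator_div) auto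
  also have "\<dots> \<le> (\<integral>\<^sup>+ x. ennreal (exp (- s)) * (exp_p_pow q (p x) * indicator E x) \<partial>M)"
    using \<open>0 < \<epsilon>\<close> unfolding q_def
    by (intro nn_integral_mono) (auto split: split_indicator intro: varpow_le_exp_p_pow)
  also have "\<dots> = ennreal (exp (- s)) * (\<integral>\<^sup>+ x\<in>E. exp_p_pow q (p x) \<partial>M)"
    by (rule nn_integral_cmult) measurable
  also have "\<dots> \<le> ennreal (exp (- s)) * ennreal (exp s)"
    using integral_bound unfolding q_def by (rule mult_left_mono) simp
  also have "\<dots> = 1" by (simp add: ennreal_mult[symmetric] exp_minus)
  finally show "modular M p E (\<lambda>x. indicator {x\<in>E. ereal s < p x} x / \<epsilon>) \<le> 1" .
qed (fact \<open>0 < \<epsilon>\<close>)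

lemma lux_norm_tails_tendsto_zero:
  assumes "p \<in> borel_measurable M" "E \<in> sets M"
    and finite: "\<forall>q::real. 1 \<le> q \<longrightarrow> (\<integral>\<^sup>+ x\<in>E. exp_p_pow q (p x) \<partial>M) < \<infinity>"
  shows "(\<lambda>n. lux_norm M p E (indicator {x\<in>E. ereal (real n) < p x})) \<longlonglongrightarrow> 0"
proof (rule order_tendstoI)
  fix a :: ereal assume "a < 0"
  then show "\<forall>\<^sub>F n in sequentially. a < lux_norm M p E (indicator {x\<in>E. ereal (real n) < p x})"
    by (intro always_eventually allI less_le_trans[OF _ lux_norm_nonneg])
next
  fix a :: ereal assume "0 < a"
  then obtain e where "0 < ereal e" "ereal e < a" using ereal_dense2 by blast
  define \<epsilon> where "\<epsilon> = min e 1"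
  have "0 < \<epsilon>" "\<epsilon> \<le> 1" using \<open>0 < ereal e\<close> by (auto simp: \<epsilon>_def)
  have "ereal \<epsilon> < a"
    using le_less_trans[of "ereal \<epsilon>" "ereal e" a] \<open>ereal e < a\<close> by (simp add: \<epsilon>_def)
  have "1 \<le> ln (1 / \<epsilon>) + 1" using \<open>0 < \<epsilon>\<close> \<open>\<epsilon> \<le> 1\<close> by simp
  with finite have "(\<integral>\<^sup>+ x\<in>E. exp_p_pow (ln (1 / \<epsilon>) + 1) (p x) \<partial>M) < \<infinity>" by blast
  then obtain c where c: "(\<integral>\<^sup>+ x\<in>E. exp_p_pow (ln (1 / \<epsilon>) + 1) (p x) \<partial>M) = ennreal c"
    by (auto simp: less_top_ennreal)
  have tail_le: "lux_norm M p E (indicator {x\<in>E. ereal (real n) < p x}) \<le> ereal \<epsilon>"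
    if "c \<le> real n" for n
  proof (rule lux_norm_tail_le[OF assms(1,2) \<open>0 < \<epsilon>\<close>])
    have "c \<le> exp (real n)" using that exp_ge_add_one_self[of "real n"] by linarith
    then show "(\<integral>\<^sup>+ x\<in>E. exp_p_pow (ln (1 / \<epsilon>) + 1) (p x) \<partial>M) \<le> ennreal (exp (real n))"
      unfolding c by simp
  qed
  have "\<forall>\<^sub>F n in sequentially. c \<le> real n"
    using eventually_ge_at_top[of "nat \<lceil>c\<rceil>"] by (rule eventually_mono) linarith
  then show "\<forall>\<^sub>F n in sequentially. lux_norm M p E (indicator {x\<in>E. ereal (real n) < p x}) < a"
    by (rule eventually_mono) (rule le_less_trans[OF tail_le \<open>ereal \<epsilon> < a\<close>])
qed

theorem proposition8p1:
  fixes M :: "'a measure" and p :: "'a \<Rightarrow> ereal" and E :: "'a set"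
  assumes p_meas: "p \<in> borel_measurable M"
    and p_range: "\<forall>x\<in>space M. 1 \<le> p x"
    and E_meas: "E \<in> sets M"
    and E_fin: "emeasure M E < \<infinity>"
  defines "En \<equiv> (\<lambda>n::nat. {x\<in>E. p x > ereal (real n)})"
  shows "((\<forall>q::real. 1 \<le> q \<longrightarrow> (\<integral>\<^sup>+ x\<in>E. exp_p_pow q (p x) \<partial>M) < \<infinity>)
           \<longleftrightarrow> ((\<lambda>n. lux_norm M p E (indicator (En n))) \<longlonglongrightarrow> 0))
         \<and> (\<forall>q0::real. 1 \<le> q0 \<longrightarrow> (\<integral>\<^sup>+ x\<in>E. exp_p_pow q0 (p x) \<partial>M) = \<infinity> \<longrightarrow>
              (\<forall>n::nat. n \<ge> 1 \<longrightarrow> lux_norm M p E (indicator (En n)) \<ge> ereal (exp (- q0))))"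
proof -
  have p_nonneg: "\<forall>x\<in>space M. 0 \<le> p x"
  proof
    fix x assume "x \<in> space M"
    with p_range have "1 \<le> p x" by blast
    then show "0 \<le> p x" by (rule order_trans[rotated]) simp
  qed
  have lower: "ereal (exp (- q)) \<le> lux_norm M p E (indicator (En n))"
    if "1 \<le> q" "(\<integral>\<^sup>+ x\<in>E. exp_p_pow q (p x) \<partial>M) = \<infinity>" for q n
    unfolding En_def
    by (rule lux_norm_tail_ge_exp[OF p_meas E_meas p_nonneg E_fin _ that(2)]) (use that(1) in simp)
  have "\<forall>q::real. 1 \<le> q \<longrightarrow> (\<integral>\<^sup>+ x\<in>E. exp_p_pow q (p x) \<partial>M) < \<infinity>"
    if lim: "(\<lambda>n. lux_norm M p E (indicator (En n))) \<longlonglongrightarrow> 0"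
  proof (intro allI impI)
    fix q :: real assume "1 \<le> q"
    show "(\<integral>\<^sup>+ x\<in>E. exp_p_pow q (p x) \<partial>M) < \<infinity>"
    proof (rule ccontr)
      assume "\<not> (\<integral>\<^sup>+ x\<in>E. exp_p_pow q (p x) \<partial>M) < \<infinity>"
      then have "ereal (exp (- q)) \<le> 0"
        using lower[OF \<open>1 \<le> q\<close>] by (intro LIMSEQ_le_const[OF lim]) (simp flip: less_top)
      then show False by simp
    qed
  qed
  moreover have "(\<lambda>n. lux_norm M p E (indicator (En n))) \<longlonglongrightarrow> 0"
    if "\<forall>q::real. 1 \<le> q \<longrightarrow> (\<integral>\<^sup>+ x\<in>E. exp_p_pow q (p x) \<partial>M) < \<infinity>"
    unfolding En_def using lux_norm_tails_tendsto_zero[OF p_meas E_meas that] by simp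
  ultimately show ?thesis using lower by (intro conjI iffI allI impI) auto
qed

end
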